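(* Let $\sum_{i=0}^\infty a_it^i\in\mathbb{C}_3[[t]]$ be a power series with integral coefficients ($v(a_i)\ge 0$ for all $i$), and let $f(t)=\sum_{i=0}^\infty\frac{a_i}{i+1}t^{i+1}$. If $v(a_0)=0$, $v(a_1)=0$, or $v(a_2)=0$, then $\mathrm{New}_{1/3}(f)\subset[1,3]$.
   Context: $\mathbb{C}_3$ is the completion of $\overline{\mathbb{Q}_3}$ with valuation $v$, $v(3)=1$, $v(0)=\infty$. For a positive rational $m$ and a power series $F(t)=\sum_{u\ge0}c_ut^u$, the Newton polygon $\mathrm{New}_m(F)\subset\mathbb{R}$ is the convex hull of the set of $u\in\mathbb{Z}_{\ge0}$ for which there exists $w\in\mathbb{Q}$ with $w\ge m$ such that $v(c_u)+wu=v(c_{u'})+wu'$ for some $u'\ne u$ and $v(c_u)+wu\le v(c_{u''})+wu''$ for all $u''\in\mathbb{Z}_{\ge0}$. *)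

theory Defs
  imports "HOL-Analysis.Analysis" "HOL-Library.Extended_Real"
begin

text \<open>A valuation v on a field of characteristic 0, with values in the rationals
  (plus infinity for 0), multiplicative, ultrametric and normalised by v(3) = 1.
  The completed algebraic closure C_3 of Q_3 with its valuation is an instance;
  these axioms force v to agree with the 3-adic valuation on Q.\<close>
definition C3_valuation :: "('a::field_char_0 \<Rightarrow> ereal) \<Rightarrow> bool" where
  "C3_valuation v \<longleftrightarrow>
     (\<forall>x. v x = \<infinity> \<longleftrightarrow> x = 0) \<and>
     (\<forall>x. x \<noteq> 0 \<longrightarrow> (\<exists>q::rat. v x = ereal (of_rat q))) \<and>
     (\<forall>x y. v (x * y) = v x + v y) \<and>
     (\<forall>x y. min (v x) (v y) \<le> v (x + y)) \<and>
     v 3 = 1"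

definition newton_polygon ::
  "('a \<Rightarrow> ereal) \<Rightarrow> rat \<Rightarrow> (nat \<Rightarrow> 'a) \<Rightarrow> real set" where
  "newton_polygon v m c = convex hull (real ` {u::nat.
      \<exists>w::rat. w \<ge> m \<and>
        (\<exists>u'. u' \<noteq> u \<and>
           v (c u) + ereal (of_rat w * real u) = v (c u') + ereal (of_rat w * real u')) \<and>
        (\<forall>u''. v (c u) + ereal (of_rat w * real u) \<le> v (c u'') + ereal (of_rat w * real u''))})"

end

theory Submission imports Defs begin

(* Write c_u = a_(u-1) / u for the coefficients of f. If v(a_(j-1)) = 0 with j \<le> 3, then
   v(c_j) + j/3 < 1, since v(j) \<le> 1 with equality only for j = 3. For u \<ge> 4 the largest
   power 3^k dividing u satisfies 3k + 3 \<le> u, so integrality of a_(u-1) gives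
   v(c_u) + u/3 \<ge> 1. Hence for every w \<ge> 1/3 we get v(c_j) + wj < v(c_u) + wu whenever
   u \<ge> 4 or u = 0 (where c_0 = 0), so such u never minimise v(c_u) + wu. *)

lemma three_pow_ge: "k \<ge> 2 \<Longrightarrow> 3 * k + 3 \<le> (3::nat) ^ k"
  by (induction k rule: dec_induct) auto

lemma three_pow_dvd_imp_le:
  assumes "(u::nat) \<ge> 4" "3 ^ k dvd u" shows "3 * k + 3 \<le> u"
proof -
  have le: "3 ^ k \<le> u" using assms by (intro dvd_imp_le) auto
  consider "k = 0" | "k = 1" | "k \<ge> 2" by linarith
  then show ?thesis
  proof cases
    case 2 then show ?thesis using assms by auto
  next
    case 3 then show ?thesis using three_pow_ge[of k] le by linarith
  qed (use assms in simp)
qed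

lemma newton_polygon_subset_interval:
  assumes "\<And>u. u \<notin> {lo..hi} \<Longrightarrow> \<exists>j. \<forall>w::real. of_rat m \<le> w \<longrightarrow>
      v (c j) + ereal (w * real j) < v (c u) + ereal (w * real u)"
  shows "newton_polygon v m c \<subseteq> {real lo..real hi}"
  unfolding newton_polygon_def
proof (intro hull_minimal image_subsetI convex_real_interval, rule ccontr)
  fix u
  assume "u \<in> {u. \<exists>w\<ge>m. (\<exists>u'. u' \<noteq> u \<and>
      v (c u) + ereal (of_rat w * real u) = v (c u') + ereal (of_rat w * real u')) \<and>
      (\<forall>u''. v (c u) + ereal (of_rat w * real u) \<le> v (c u'') + ereal (of_rat w * real u''))}"
  then obtain w where "m \<le> w"
    and minimal: "\<And>u''. v (c u) + ereal (of_rat w * real u) \<le> v (c u'') + ereal (of_rat w * real u'')"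
    by blast
  assume "real u \<notin> {real lo..real hi}"
  then obtain j where "\<forall>w::real. of_rat m \<le> w \<longrightarrow>
      v (c j) + ereal (w * real j) < v (c u) + ereal (w * real u)"
    using assms by auto
  then have "v (c j) + ereal (of_rat w * real j) < v (c u) + ereal (of_rat w * real u)"
    using \<open>m \<le> w\<close> by (simp add: of_rat_less_eq)
  with minimal[of j] show False by simp
qed

lemma ereal_add_slope_less:
  fixes x y :: ereal and j u m w :: real
  assumes "x + ereal (m * j) < y + ereal (m * u)" "j \<le> u" "m \<le> w"
  shows "x + ereal (w * j) < y + ereal (w * u)"
proof -
  have "(w - m) * j \<le> (w - m) * u" using assms(2,3) by (intro mult_left_mono) auto
  then show ?thesis using assms(1)
    by (cases x; cases y) (auto simp: algebra_simps)
qed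

definition antiderivative_coeff :: "(nat \<Rightarrow> 'a::field) \<Rightarrow> nat \<Rightarrow> 'a" where
  "antiderivative_coeff a u = (if u = 0 then 0 else a (u - 1) / of_nat u)"

locale C3_valued =
  fixes v :: "'a::field_char_0 \<Rightarrow> ereal"
  assumes C3_valuation: "C3_valuation v"
begin

lemma valuation_eq_infinity_iff: "v x = \<infinity> \<longleftrightarrow> x = 0"
  using C3_valuation by (simp add: C3_valuation_def)

lemma valuation_mult: "v (x * y) = v x + v y"
  using C3_valuation by (simp add: C3_valuation_def)

lemma valuation_add: "min (v x) (v y) \<le> v (x + y)"
  using C3_valuation by (simp add: C3_valuation_def)

lemma valuation_three: "v 3 = 1"
  using C3_valuation by (simp add: C3_valuation_def)

lemma valuation_finite: "x \<noteq> 0 \<Longrightarrow> \<exists>r::real. v x = ereal r"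
  using C3_valuation unfolding C3_valuation_def by (metis)

lemma valuation_one: "v 1 = 0"
proof -
  obtain r where "v 1 = ereal r" using valuation_finite[of 1] by auto
  moreover have "v 1 = v 1 + v 1" using valuation_mult[of 1 1] by simp
  ultimately show ?thesis by (simp add: zero_ereal_def)
qed

lemma valuation_minus: "v (- x) = v x"
proof -
  obtain r where r: "v (-1) = ereal r" using valuation_finite[of "-1"] by auto
  have "v 1 = v (-1) + v (-1)" using valuation_mult[of "-1" "-1"] by simp
  with r valuation_one have "v (-1) = 0" by (simp add: zero_ereal_def)
  then show ?thesis using valuation_mult[of "-1" x] by simp
qed

lemma valuation_of_nat_nonneg: "v (of_nat n) \<ge> 0"
proof (induction n)
  case 0 then show ?case using valuation_eq_infinity_iff[of 0] by simp
next
  case (Suc n)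
  have "min (v (of_nat n)) (v 1) \<le> v (of_nat n + 1)" by (rule valuation_add)
  then show ?case using Suc valuation_one by (simp add: add.commute)
qed

lemma valuation_add_eq_left: "v x < v y \<Longrightarrow> v (x + y) = v x"
  using valuation_add[of x y] valuation_add[of "x + y" "- y"] valuation_minus[of y]
  by (auto simp: min_def split: if_splits)

lemma valuation_two: "v 2 = 0"
proof -
  have "min (v 3) (v (-2)) \<le> v (3 + (-2))" by (rule valuation_add)
  then have "min 1 (v 2) \<le> 0"
    using valuation_three valuation_minus[of 2] valuation_one by simp
  moreover have "v 2 \<ge> 0" using valuation_of_nat_nonneg[of 2] by simp
  ultimately show ?thesis by (auto simp: min_def split: if_splits)
qed

lemma valuation_of_nat_three_pow_dvd:
  "n > 0 \<Longrightarrow> \<exists>k. v (of_nat n) = ereal (real k) \<and> 3 ^ k dvd n"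
proof (induction n rule: less_induct)
  case (less n)
  show ?case
  proof (cases "3 dvd n")
    case True
    then obtain m where m: "n = 3 * m" by auto
    with less.prems have "m > 0" "m < n" by auto
    with less.IH obtain k where k: "v (of_nat m) = ereal (real k)" "3 ^ k dvd m"
      by blast
    have "v (of_nat n) = ereal (real (Suc k))"
      using m k valuation_mult[of 3 "of_nat m"] valuation_three by (simp add: one_ereal_def)
    then show ?thesis using k m by (intro exI[of _ "Suc k"]) auto
  next
    case False
    have "n mod 3 = 1 \<or> n mod 3 = 2" using False by presburger
    then have unit: "v (of_nat (n mod 3)) = 0" using valuation_one valuation_two by auto
    have "v (of_nat (3 * (n div 3))) = 1 + v (of_nat (n div 3))"
      using valuation_mult[of 3 "of_nat (n div 3)"] valuation_three by simp
    also have "\<dots> \<ge> 1" using valuation_of_nat_nonneg[of "n div 3"] by (simp add: add_increasing2)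
    finally have "v (of_nat (n mod 3)) < v (of_nat (3 * (n div 3)))"
      using unit by (auto intro: less_le_trans[of 0 "1::ereal"])
    then have "v (of_nat (n mod 3) + of_nat (3 * (n div 3))) = 0"
      using unit valuation_add_eq_left by simp
    then have "v (of_nat n) = 0" by (metis mod_div_mult_eq mult.commute of_nat_add)
    then show ?thesis by (intro exI[of _ 0]) (simp add: zero_ereal_def)
  qed
qed

lemma valuation_of_nat_le: "n \<ge> 4 \<Longrightarrow> v (of_nat n) \<le> ereal (real n / 3 - 1)"
proof -
  assume "n \<ge> 4"
  moreover obtain k where "v (of_nat n) = ereal (real k)" "3 ^ k dvd n"
    using valuation_of_nat_three_pow_dvd[of n] \<open>n \<ge> 4\<close> by auto
  ultimately show ?thesis using three_pow_dvd_imp_le[of n k] by simp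
qed

lemma valuation_divide_of_nat: "n > 0 \<Longrightarrow> v (x / of_nat n) + v (of_nat n) = v x"
  using valuation_mult[of "x / of_nat n" "of_nat n"] by simp

lemma valuation_divide_small:
  assumes "j \<in> {1, 2, 3}" "v x = 0"
  shows "v (x / of_nat j) + ereal (real j / 3) < 1"
proof -
  have "v (x / of_nat j) + v (of_nat j) = 0"
    using valuation_divide_of_nat[of j x] assms by auto
  moreover have "v (of_nat j) = (if j = 3 then 1 else 0)"
    using assms(1) valuation_one valuation_two valuation_three by auto
  ultimately show ?thesis
    using assms(1) by (cases "v (x / of_nat j)") (auto simp: zero_ereal_def one_ereal_def)
qed

lemma valuation_divide_large:
  assumes "n \<ge> 4" "v x \<ge> 0"
  shows "1 \<le> v (x / of_nat n) + ereal (real n / 3)"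
proof -
  have "0 \<le> v (x / of_nat n) + v (of_nat n)"
    using valuation_divide_of_nat[of n x] assms by simp
  moreover have "v (of_nat n) \<le> ereal (real n / 3 - 1)"
    using valuation_of_nat_le assms(1) by blast
  ultimately show ?thesis
    by (cases "v (x / of_nat n)"; cases "v (of_nat n)") auto
qed

lemma antiderivative_coeff_below:
  assumes integral: "\<forall>i. v (a i) \<ge> 0" and j: "j \<in> {1, 2, 3}" "v (a (j - 1)) = 0"
    and u: "u \<notin> {1..3}" and w: "1/3 \<le> w"
  shows "v (antiderivative_coeff a j) + ereal (w * real j)
    < v (antiderivative_coeff a u) + ereal (w * real u)"
proof -
  have low: "v (antiderivative_coeff a j) + ereal ((1/3) * real j) < 1"
    using valuation_divide_small[OF j] j(1) by (auto simp: antiderivative_coeff_def)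
  consider "u = 0" | "u \<ge> 4" using u by fastforce
  then show ?thesis
  proof cases
    case 1
    then show ?thesis
      using low j(1) valuation_eq_infinity_iff[of 0] by (auto simp: antiderivative_coeff_def)
  next
    case 2
    have "1 \<le> v (antiderivative_coeff a u) + ereal ((1/3) * real u)"
      using valuation_divide_large[OF 2] integral 2 by (auto simp: antiderivative_coeff_def)
    with low have "v (antiderivative_coeff a j) + ereal ((1/3) * real j)
        < v (antiderivative_coeff a u) + ereal ((1/3) * real u)"
      by (rule less_le_trans)
    then show ?thesis by (rule ereal_add_slope_less[OF _ _ w]) (use j(1) 2 in auto)
  qed
qed

end

theorem lemma7p1:
  fixes v :: "'a::field_char_0 \<Rightarrow> ereal" and a :: "nat \<Rightarrow> 'a"
  assumes "C3_valuation v"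
    and "\<forall>i. v (a i) \<ge> 0"
    and "v (a 0) = 0 \<or> v (a 1) = 0 \<or> v (a 2) = 0"
  shows "newton_polygon v (1/3)
           (\<lambda>u. if u = 0 then 0 else a (u - 1) / of_nat u) \<subseteq> {1..3}"
proof -
  interpret C3_valued v by unfold_locales (rule assms(1))
  obtain j where j: "j \<in> {1, 2, 3}" "v (a (j - 1)) = 0"
    using assms(3) by (metis diff_Suc_1 insertCI numeral_2_eq_2 numeral_3_eq_3 One_nat_def)
  have "newton_polygon v (1/3) (antiderivative_coeff a) \<subseteq> {real 1..real 3}"
    by (rule newton_polygon_subset_interval)
      (use antiderivative_coeff_below[OF assms(2) j] in \<open>auto simp: of_rat_divide\<close>)
  then show ?thesis by (simp add: antiderivative_coeff_def[abs_def])
qed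

end
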